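(* Let $p\ge2$ and, for $\tau=1,\dots,p$, let $\hat f_\tau:\mathbb{R}^n\to\mathbb{R}$ be $\mu$-strongly convex and $\hat c_\tau:\mathbb{R}^n\times\mathbb{R}^n\times\mathbb{R}^r\to\mathbb{R}$ be convex and $\ell$-strongly smooth, all twice continuously differentiable. For an initial state $\hat x_0\in\mathbb{R}^n$, disturbances $\hat w=(\hat w_0,\dots,\hat w_{p-1})$ with $\hat w_\tau\in\mathbb{R}^r$, and a terminal state $\hat x_p\in\mathbb{R}^n$, let \[\hat\psi(\hat x_0,\hat w,\hat x_p) := \arg\min_{\hat x_{1:p-1}}\sum_{\tau=1}^{p-1}\hat f_\tau(\hat x_\tau) + \sum_{\tau=1}^p\hat c_\tau(\hat x_\tau,\hat x_{\tau-1},\hat w_{\tau-1}),\] indexed by $1,\dots,p-1$. Then for any two tuples $(\hat x_0,\hat w,\hat x_p)$ and $(\hat x_0',\hat w',\hat x_p')$ and all $1\le h\le p-1$, \[\|\hat\psi(\hat x_0,\hat w,\hat x_p)_h - \hat\psi(\hat x_0',\hat w',\hat x_p')_h\| \le C_0\left(\lambda_0^{h-1}\|\hat x_0-\hat x_0'\| + \sum_{\tau=0}^{p-1}\lambda_0^{|h-\tau|-1}\|\hat w_\tau-\hat w_\tau'\| + \lambda_0^{p-h-1}\|\hat x_p-\hat x_p'\|\right),\] where $C_0 = 2\ell/\mu$ and $\lambda_0 = 1 - 2\left(\sqrt{1+2\ell/\mu}+1\right)^{-1}$.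
   Context: Norms are Euclidean. A function $g$ is $\ell$-strongly smooth if $g(y)\le g(x)+\langle\nabla g(x),y-x\rangle+\frac\ell2\|y-x\|^2$ for all $x,y$, and $m$-strongly convex if $g(y)\ge g(x)+\langle\nabla g(x),y-x\rangle+\frac m2\|y-x\|^2$ for all $x,y$. *)

theory Defs
  imports "HOL-Analysis.Analysis"
begin

text \<open>Gradient-based notions for real-valued functions on a Euclidean space
  (norms/inner products are Euclidean; on product types the inner product is the
  sum of the component inner products, i.e. the Euclidean one on the concatenation).\<close>

definition has_gradient_everywhere :: "('a::euclidean_space \<Rightarrow> real) \<Rightarrow> ('a \<Rightarrow> 'a) \<Rightarrow> bool" where
  "has_gradient_everywhere g G \<longleftrightarrow> (\<forall>x. (g has_derivative (\<lambda>h. G x \<bullet> h)) (at x))"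

definition strongly_convex :: "real \<Rightarrow> ('a::euclidean_space \<Rightarrow> real) \<Rightarrow> bool" where
  "strongly_convex m g \<longleftrightarrow> (\<exists>G. has_gradient_everywhere g G \<and>
     (\<forall>x y. g y \<ge> g x + G x \<bullet> (y - x) + m / 2 * (norm (y - x))\<^sup>2))"

definition strongly_smooth :: "real \<Rightarrow> ('a::euclidean_space \<Rightarrow> real) \<Rightarrow> bool" where
  "strongly_smooth l g \<longleftrightarrow> (\<exists>G. has_gradient_everywhere g G \<and>
     (\<forall>x y. g y \<le> g x + G x \<bullet> (y - x) + l / 2 * (norm (y - x))\<^sup>2))"

definition C2 :: "('a::euclidean_space \<Rightarrow> real) \<Rightarrow> bool" where
  "C2 g \<longleftrightarrow> (\<exists>G H. has_gradient_everywhere g G \<and>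
     (\<forall>x. (G has_derivative blinfun_apply (H x)) (at x)) \<and> continuous_on UNIV H)"

definition traj :: "nat \<Rightarrow> 'a \<Rightarrow> 'a \<Rightarrow> (nat \<Rightarrow> 'a) \<Rightarrow> nat \<Rightarrow> 'a" where
  "traj p x0 xp xs \<tau> = (if \<tau> = 0 then x0 else if \<tau> = p then xp else xs \<tau>)"

definition objective ::
  "(nat \<Rightarrow> 'a \<Rightarrow> real) \<Rightarrow> (nat \<Rightarrow> 'a \<times> 'a \<times> 'b \<Rightarrow> real) \<Rightarrow> nat
    \<Rightarrow> 'a \<Rightarrow> (nat \<Rightarrow> 'b) \<Rightarrow> 'a \<Rightarrow> (nat \<Rightarrow> 'a) \<Rightarrow> real" where
  "objective f c p x0 w xp xs =
     (\<Sum>\<tau>=1..p-1. f \<tau> (traj p x0 xp xs \<tau>)) +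
     (\<Sum>\<tau>=1..p. c \<tau> (traj p x0 xp xs \<tau>, traj p x0 xp xs (\<tau>-1), w (\<tau>-1)))"

text \<open>The arg-min over the intermediate states x_1..x_{p-1} (only those entries matter;
  the minimiser is unique under the hypotheses of the theorem).\<close>
definition psi ::
  "(nat \<Rightarrow> 'a \<Rightarrow> real) \<Rightarrow> (nat \<Rightarrow> 'a \<times> 'a \<times> 'b \<Rightarrow> real) \<Rightarrow> nat
    \<Rightarrow> 'a \<Rightarrow> (nat \<Rightarrow> 'b) \<Rightarrow> 'a \<Rightarrow> nat \<Rightarrow> 'a" where
  "psi f c p x0 w xp = (SOME xs. \<forall>ys. objective f c p x0 w xp xs \<le> objective f c p x0 w xp ys)"

end

theory Submission
  imports Defs
begin

text \<open>Both minimisers satisfy the stationarity conditions, a chain of equations in which the gradient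
  of \<open>c\<^sub>\<tau>\<close> couples the neighbouring states \<open>x\<^sub>\<tau>\<^sub>-\<^sub>1\<close> and \<open>x\<^sub>\<tau>\<close>. Changing \<open>x\<^sub>0\<close>, one \<open>w\<^sub>\<tau>\<close> or
  \<open>x\<^sub>p\<close> perturbs a single edge \<open>s\<close> of this chain. Test the differenced equations against the
  weighted differences \<open>\<rho>\<^sub>t (x\<^sub>t - x'\<^sub>t)\<close>, where the weights \<open>\<rho>\<^sub>t\<close> are powers of \<open>\<lambda>\<^sup>2\<close> decreasing
  geometrically from \<open>1\<close> at \<open>h\<close> to \<open>\<lambda>\<^sup>2\<^sup>d\<close> at edge \<open>s\<close>, \<open>d\<close> being the distance between the two,
  and constant beyond. Strong monotonicity of \<open>\<nabla>f\<^sub>t\<close> yields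
  \<open>\<mu> \<rho>\<^sub>t |x\<^sub>t - x'\<^sub>t|\<^sup>2\<close> at every state. By \<open>1/l\<close>-cocoercivity of \<open>\<nabla>c\<^sub>\<tau>\<close>, an edge with constant weight
  contributes a nonnegative term, an edge where the weight jumps by \<open>\<lambda>\<^sup>2\<close> costs at most \<open>\<mu>/2\<close> at each end
  (this is the choice of \<open>\<lambda>\<close>), and the perturbed edge costs at most \<open>l |\<delta>|\<close> times the local
  difference. Hence \<open>|x\<^sub>h - x'\<^sub>h| \<le> (2l/\<mu>) \<lambda>\<^sup>d |\<delta>|\<close>, and the theorem follows by changing the data
  one edge at a time.\<close>

lemma convex_on_ge_gradient:
  fixes g :: "'a::euclidean_space \<Rightarrow> real"
  assumes cv: "convex_on UNIV g" and d: "(g has_derivative (\<lambda>h. G \<bullet> h)) (at x)"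
  shows "g y \<ge> g x + G \<bullet> (y - x)"
proof -
  define \<phi> where "\<phi> t = g (x + t *\<^sub>R (y - x))" for t :: real
  have "convex_on UNIV \<phi>"
  proof (rule convex_onI)
    fix t a b :: real assume t: "0 < t" "t < 1"
    have "x + ((1 - t) * a + t * b) *\<^sub>R (y - x) = (1 - t) *\<^sub>R (x + a *\<^sub>R (y - x)) + t *\<^sub>R (x + b *\<^sub>R (y - x))"
      by (simp add: algebra_simps)
    then show "\<phi> ((1 - t) *\<^sub>R a + t *\<^sub>R b) \<le> (1 - t) * \<phi> a + t * \<phi> b"
      unfolding \<phi>_def using convex_onD[OF cv, of t "x + a *\<^sub>R (y - x)" "x + b *\<^sub>R (y - x)"] t
      by simp
  qed simp
  moreover have "(\<phi> has_field_derivative (G \<bullet> (y - x))) (at 0)"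
  proof -
    have "((\<lambda>t::real. x + t *\<^sub>R (y - x)) has_derivative (\<lambda>t. t *\<^sub>R (y - x))) (at 0)"
      by (auto intro!: derivative_eq_intros)
    moreover have "(g has_derivative (\<lambda>h. G \<bullet> h)) (at (x + 0 *\<^sub>R (y - x)))"
      using d by simp
    ultimately have "(\<phi> has_derivative (\<lambda>t. G \<bullet> (t *\<^sub>R (y - x)))) (at 0)"
      unfolding \<phi>_def by (rule has_derivative_compose)
    then have "(\<phi> has_derivative (\<lambda>t. (G \<bullet> (y - x)) * t)) (at 0)"
      by (simp add: mult.commute)
    then show ?thesis by (simp add: has_field_derivative_def)
  qed
  ultimately have "\<phi> 1 - \<phi> 0 \<ge> G \<bullet> (y - x)"
    using convex_on_imp_above_tangent[of UNIV \<phi> 0 1] by simp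
  then show ?thesis by (simp add: \<phi>_def)
qed

lemma gradient_cocoercive:
  fixes g :: "'a::real_inner \<Rightarrow> real"
  assumes l: "l > 0"
    and cv: "\<And>x y. g y \<ge> g x + G x \<bullet> (y - x)"
    and sm: "\<And>x y. g y \<le> g x + G x \<bullet> (y - x) + l / 2 * (norm (y - x))\<^sup>2"
  shows "(G x - G y) \<bullet> (x - y) \<ge> (norm (G x - G y))\<^sup>2 / l"
proof -
  define D where "D = G y - G x"
  have a1: "g (y - (1/l) *\<^sub>R D) \<ge> g x + G x \<bullet> (y - (1/l) *\<^sub>R D - x)" by (rule cv)
  have a2: "g (y - (1/l) *\<^sub>R D) \<le> g y + G y \<bullet> (- (1/l) *\<^sub>R D) + l / 2 * (norm (- (1/l) *\<^sub>R D))\<^sup>2"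
    using sm[where x=y and y="y - (1/l) *\<^sub>R D"] by simp
  have b1: "g (x + (1/l) *\<^sub>R D) \<ge> g y + G y \<bullet> (x + (1/l) *\<^sub>R D - y)" by (rule cv)
  have b2: "g (x + (1/l) *\<^sub>R D) \<le> g x + G x \<bullet> ((1/l) *\<^sub>R D) + l / 2 * (norm ((1/l) *\<^sub>R D))\<^sup>2"
    using sm[where x=x and y="x + (1/l) *\<^sub>R D"] by simp
  have n: "(norm ((1/l) *\<^sub>R D))\<^sup>2 = (norm D)\<^sup>2 / l\<^sup>2" "(norm (- (1/l) *\<^sub>R D))\<^sup>2 = (norm D)\<^sup>2 / l\<^sup>2"
    using l by (auto simp: power_divide)
  have e: "G y \<bullet> D - G x \<bullet> D = (norm D)\<^sup>2"
    by (simp add: D_def inner_diff_left power2_norm_eq_inner)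
  have "G x \<bullet> (y - x) + G y \<bullet> (x - y) + (1/l) * (norm D)\<^sup>2 \<le> 0"
    using a1 a2 b1 b2 n e l
    by (simp add: inner_diff_right inner_add_right algebra_simps power2_eq_square divide_simps)
  then show ?thesis
    by (simp add: D_def norm_minus_commute inner_diff_right inner_diff_left algebra_simps)
qed

lemma gradient_strongly_monotone:
  fixes g :: "'a::real_inner \<Rightarrow> real"
  assumes sc: "\<And>x y. g y \<ge> g x + G x \<bullet> (y - x) + m / 2 * (norm (y - x))\<^sup>2"
  shows "(G x - G y) \<bullet> (x - y) \<ge> m * (norm (x - y))\<^sup>2"
  using sc[of x y] sc[of y x] norm_minus_commute[of y x]
  by (simp add: inner_diff_right inner_diff_left algebra_simps)

text \<open>Cocoercivity says that \<open>v\<close> lies in the ball of radius \<open>l/2 \<parallel>d\<parallel>\<close> around \<open>(l/2) d\<close>.\<close>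

lemma cocoercive_inner_ge:
  fixes v d y :: "'a::real_inner"
  assumes l: "l > 0" and co: "v \<bullet> d \<ge> (norm v)\<^sup>2 / l"
  shows "v \<bullet> y \<ge> l / 2 * (d \<bullet> y - norm d * norm y)"
proof -
  have "(norm (v - (l/2) *\<^sub>R d))\<^sup>2 = v \<bullet> v - l * (v \<bullet> d) + (l/2)\<^sup>2 * (d \<bullet> d)"
    unfolding power2_norm_eq_inner
    by (simp add: inner_diff_left inner_diff_right inner_commute algebra_simps power2_eq_square)
  also have "\<dots> = (norm v)\<^sup>2 - l * (v \<bullet> d) + (l/2)\<^sup>2 * (norm d)\<^sup>2"
    by (simp only: power2_norm_eq_inner)
  also have "\<dots> \<le> (l/2 * norm d)\<^sup>2"
  proof -
    have "(norm v)\<^sup>2 \<le> l * (v \<bullet> d)" using co l by (simp add: pos_divide_le_eq mult.commute)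
    then show ?thesis using power_mult_distrib[of "l/2" "norm d" 2] by linarith
  qed
  finally have "norm (v - (l/2) *\<^sub>R d) \<le> l/2 * norm d"
    by (rule power2_le_imp_le) (use l in simp)
  then have "\<bar>(v - (l/2) *\<^sub>R d) \<bullet> y\<bar> \<le> l/2 * norm d * norm y"
    by (meson Cauchy_Schwarz_ineq2 mult_right_mono norm_ge_zero order_trans)
  then have "(v - (l/2) *\<^sub>R d) \<bullet> y \<ge> - (l/2 * norm d * norm y)" by linarith
  then show ?thesis by (simp add: inner_diff_left algebra_simps)
qed

lemma kantorovich_two_point:
  fixes A B P R lam c :: real
  assumes "lam > 0" "R = lam\<^sup>2 * P" "2 * lam * c = 1 + lam\<^sup>2"
  shows "(A + B) * (P\<^sup>2 * A + R\<^sup>2 * B) \<le> c\<^sup>2 * (P * A + R * B)\<^sup>2"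
proof -
  have "4 * lam\<^sup>2 * (c\<^sup>2 * (P * A + R * B)\<^sup>2) - 4 * lam\<^sup>2 * ((A + B) * (P\<^sup>2 * A + R\<^sup>2 * B))
      = (P * (1 - lam\<^sup>2) * (A - lam\<^sup>2 * B))\<^sup>2"
  proof -
    have "4 * lam\<^sup>2 * c\<^sup>2 = (1 + lam\<^sup>2)\<^sup>2"
      using arg_cong[OF assms(3), of "\<lambda>x. x\<^sup>2"] by (simp add: power_mult_distrib)
    then show ?thesis unfolding assms(2) by algebra
  qed
  then have "4 * lam\<^sup>2 * ((A + B) * (P\<^sup>2 * A + R\<^sup>2 * B)) \<le> 4 * lam\<^sup>2 * (c\<^sup>2 * (P * A + R * B)\<^sup>2)"
    by (metis diff_ge_0_iff_ge zero_le_power2)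
  then show ?thesis using assms(1) by simp
qed

lemma norm_Pair3_power2:
  fixes a b :: "'a::real_inner" and w :: "'b::real_inner"
  shows "(norm (a, b, w))\<^sup>2 = (norm a)\<^sup>2 + (norm b)\<^sup>2 + (norm w)\<^sup>2"
  by (simp add: power2_norm_eq_inner inner_Pair)

lemma inner_Pair3_zero:
  fixes v :: "'a::real_inner \<times> 'a \<times> 'b::real_inner"
  shows "v \<bullet> (a, b, 0) = fst v \<bullet> a + fst (snd v) \<bullet> b"
  by (cases v) (auto simp: inner_Pair)

text \<open>The two-point Kantorovich inequality is where the relation between \<open>lam\<close>, \<open>mu\<close> and \<open>l\<close>
  comes from.\<close>

lemma cocoercive_inner_rescaled_ge:
  fixes v :: "'a::real_inner \<times> 'a \<times> 'b::real_inner" and a b :: 'a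
  assumes l: "l > 0" and mu: "mu > 0" and lam: "lam > 0" "2 * lam * (1 + mu/l) = 1 + lam\<^sup>2"
    and co: "v \<bullet> (a, b, 0) \<ge> (norm v)\<^sup>2 / l"
    and PR: "P > 0" "R > 0" "R = lam\<^sup>2 * P \<or> P = lam\<^sup>2 * R"
  shows "v \<bullet> (P *\<^sub>R a, R *\<^sub>R b, 0) \<ge> -(mu/2) * (P * (norm a)\<^sup>2 + R * (norm b)\<^sup>2)"
proof -
  define d where "d = (a, b, 0::'b)"
  define y where "y = (P *\<^sub>R a, R *\<^sub>R b, 0::'b)"
  define S where "S = P * (norm a)\<^sup>2 + R * (norm b)\<^sup>2"
  define c where "c = 1 + mu / l"
  have "((norm a)\<^sup>2 + (norm b)\<^sup>2) * (P\<^sup>2 * (norm a)\<^sup>2 + R\<^sup>2 * (norm b)\<^sup>2) \<le> c\<^sup>2 * S\<^sup>2"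
    using PR(3)
  proof
    assume "R = lam\<^sup>2 * P"
    from kantorovich_two_point[OF lam(1) this lam(2)[folded c_def]] show ?thesis
      by (simp add: S_def)
  next
    assume "P = lam\<^sup>2 * R"
    from kantorovich_two_point[where A = "(norm b)\<^sup>2" and B = "(norm a)\<^sup>2",
        OF lam(1) this lam(2)[folded c_def]]
    show ?thesis by (simp add: S_def add.commute)
  qed
  then have "(norm d * norm y)\<^sup>2 \<le> (c * S)\<^sup>2"
    by (simp add: d_def y_def norm_Pair3_power2 power_mult_distrib)
  moreover have "c * S \<ge> 0" using l mu PR by (simp add: c_def S_def)
  ultimately have "norm d * norm y \<le> c * S" by (rule power2_le_imp_le)
  moreover have "d \<bullet> y = S" by (simp add: d_def y_def S_def inner_Pair power2_norm_eq_inner)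
  ultimately have "l / 2 * (S - c * S) \<le> l / 2 * (d \<bullet> y - norm d * norm y)"
    using l by (intro mult_left_mono) auto
  also have "\<dots> \<le> v \<bullet> y"
    using cocoercive_inner_ge[OF l] co by (simp add: d_def)
  also have "l / 2 * (S - c * S) = -(mu/2) * S" using l by (simp add: c_def field_simps)
  finally show ?thesis by (simp add: y_def S_def)
qed

lemma cocoercive_inner_shifted_ge:
  fixes v d e :: "'a::real_inner"
  assumes l: "l > 0" and co: "v \<bullet> (d + e) \<ge> (norm v)\<^sup>2 / l"
  shows "v \<bullet> d \<ge> - (l * norm e * norm d)"
proof -
  have "(d + e) \<bullet> d - norm (d + e) * norm d \<ge> - 2 * (norm e * norm d)"
  proof -
    have "norm (d + e) * norm d \<le> (norm d + norm e) * norm d"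
      by (simp add: mult_right_mono norm_triangle_ineq)
    moreover have "(d + e) \<bullet> d = (norm d)\<^sup>2 + e \<bullet> d"
      by (simp add: inner_add_left power2_norm_eq_inner)
    ultimately show ?thesis using Cauchy_Schwarz_ineq2[of e d]
      by (simp add: algebra_simps power2_eq_square)
  qed
  then have "l / 2 * ((d + e) \<bullet> d - norm (d + e) * norm d) \<ge> - (l * norm e * norm d)"
    using l mult_left_mono[of _ _ "l/2"] by fastforce
  then show ?thesis using cocoercive_inner_ge[OF l co, of d] by linarith
qed

lemma sum_chain_edges:
  fixes a b y :: "nat \<Rightarrow> 'a::real_inner"
  assumes "y 0 = 0" "y p = 0" "p \<ge> 1"
  shows "(\<Sum>\<tau>=1..p. a \<tau> \<bullet> y \<tau> + b \<tau> \<bullet> y (\<tau>-1)) = (\<Sum>t=1..p-1. (a t + b (t+1)) \<bullet> y t)"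
proof -
  obtain q where q: "p = Suc q" using assms(3) by (cases p) auto
  have "(\<Sum>\<tau>=1..p. b \<tau> \<bullet> y (\<tau>-1)) = (\<Sum>t=0..q. b (Suc t) \<bullet> y t)"
    unfolding q One_nat_def sum.shift_bounds_cl_Suc_ivl by simp
  also have "\<dots> = (\<Sum>t=1..p-1. b (t+1) \<bullet> y t)"
    using assms(1) by (simp add: q sum.atLeast_Suc_atMost)
  moreover have "(\<Sum>\<tau>=1..p. a \<tau> \<bullet> y \<tau>) = (\<Sum>t=1..p-1. a t \<bullet> y t)"
    using assms(2) by (simp add: q sum.cl_ivl_Suc)
  ultimately show ?thesis by (simp add: sum.distrib inner_add_left)
qed

text \<open>Edge \<open>s\<close> joins the states \<open>s - 1\<close> and \<open>s\<close>; \<open>edge_dist s h\<close> is the distance from state \<open>h\<close>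
  to the nearer end of edge \<open>s\<close>.\<close>

definition edge_dist :: "nat \<Rightarrow> nat \<Rightarrow> nat" where
  "edge_dist s h = (if s \<le> h then h - s else s - 1 - h)"

text \<open>The test weights are \<open>lam\<^sup>2 ^ weight_exponent s h t\<close>: the exponent vanishes at \<open>h\<close> and beyond it,
  grows by one per edge towards edge \<open>s\<close> and stays constant from there on.\<close>

definition weight_exponent :: "nat \<Rightarrow> nat \<Rightarrow> nat \<Rightarrow> nat" where
  "weight_exponent s h t = (if s \<le> h then min (h - t) (h - s) else min (t - h) (s - 1 - h))"

lemma weight_exponent_step:
  assumes "t \<ge> 1"
  shows "weight_exponent s h (t-1) = weight_exponent s h t
    \<or> weight_exponent s h (t-1) = Suc (weight_exponent s h t)
    \<or> weight_exponent s h t = Suc (weight_exponent s h (t-1))"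
  using assms unfolding weight_exponent_def by (auto simp: min_def; arith)

lemma weight_exponent_flat_at:
  "weight_exponent s h (h-1) = weight_exponent s h h \<or> weight_exponent s h h = weight_exponent s h (h+1)"
  by (auto simp: weight_exponent_def)

lemma weight_exponent_at_end: "weight_exponent s h h = 0"
  by (simp add: weight_exponent_def)

lemma weight_exponent_at_source:
  assumes "s \<ge> 1"
  shows "weight_exponent s h (s-1) = edge_dist s h" "weight_exponent s h s = edge_dist s h"
  using assms by (auto simp: weight_exponent_def edge_dist_def)

lemma quadratic_self_bound:
  fixes S r L n mu :: real
  assumes "mu > 0" "r > 0" "S \<ge> 0" "mu / 2 * S \<le> r * (L * n)" "r * n\<^sup>2 \<le> S"
  shows "S \<le> r * (2 * L / mu)\<^sup>2"
proof (cases "S = 0")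
  case False
  have "(mu / 2 * S)\<^sup>2 \<le> (r * (L * n))\<^sup>2"
    using assms by (intro power_mono) auto
  also have "\<dots> = r * L\<^sup>2 * (r * n\<^sup>2)" by (simp add: power2_eq_square)
  also have "\<dots> \<le> r * L\<^sup>2 * S" using assms by (intro mult_left_mono) auto
  finally have "(mu / 2)\<^sup>2 * S * S \<le> r * L\<^sup>2 * S"
    by (simp add: power2_eq_square algebra_simps)
  then have "(mu / 2)\<^sup>2 * S \<le> r * L\<^sup>2"
    using assms False by simp
  then show ?thesis using assms by (simp add: power_divide field_simps)
qed (use assms in simp)

text \<open>The differenced optimality conditions of two minimisers whose data differ only on edge \<open>s\<close>:
  \<open>U t\<close> is the difference of the states (zero at both ends), \<open>a t\<close> the difference of the gradients
  of \<open>f t\<close>, \<open>g \<tau>\<close> the difference of the gradients of \<open>c \<tau>\<close>, and \<open>\<delta>\<close> the change of the data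
  \<open>(x\<^sub>p, x\<^sub>0, w\<^sub>s\<^sub>-\<^sub>1)\<close> seen by edge \<open>s\<close>.\<close>

locale perturbed_chain =
  fixes p s :: nat and mu l lam :: real
    and U :: "nat \<Rightarrow> 'a::real_inner" and a :: "nat \<Rightarrow> 'a"
    and g :: "nat \<Rightarrow> 'a \<times> 'a \<times> 'b::real_inner" and \<delta> :: "'a \<times> 'a \<times> 'b"
  assumes mu: "mu > 0" and l: "l > 0"
    and lam: "lam > 0" "2 * lam * (1 + mu / l) = 1 + lam\<^sup>2"
    and s: "s \<in> {1..p}"
    and U_0: "U 0 = 0" and U_p: "U p = 0"
    and site_monotone: "\<And>t. t \<in> {1..p-1} \<Longrightarrow> a t \<bullet> U t \<ge> mu * (norm (U t))\<^sup>2"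
    and edge_cocoercive: "\<And>\<tau>. \<tau> \<in> {1..p} \<Longrightarrow>
      g \<tau> \<bullet> ((U \<tau>, U (\<tau>-1), 0) + (if \<tau> = s then \<delta> else 0)) \<ge> (norm (g \<tau>))\<^sup>2 / l"
    and balance: "\<And>t. t \<in> {1..p-1} \<Longrightarrow> a t + fst (g t) + fst (snd (g (t+1))) = 0"
begin

lemma weighted_balance:
  "(\<Sum>t=1..p-1. \<rho> t * (a t \<bullet> U t)) + (\<Sum>\<tau>=1..p. g \<tau> \<bullet> (\<rho> \<tau> *\<^sub>R U \<tau>, \<rho> (\<tau>-1) *\<^sub>R U (\<tau>-1), 0)) = 0"
proof -
  define y where "y t = \<rho> t *\<^sub>R U t" for t
  have "(\<Sum>\<tau>=1..p. g \<tau> \<bullet> (y \<tau>, y (\<tau>-1), 0)) = (\<Sum>t=1..p-1. (fst (g t) + fst (snd (g (t+1)))) \<bullet> y t)"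
    using sum_chain_edges[of y p "\<lambda>\<tau>. fst (g \<tau>)" "\<lambda>\<tau>. fst (snd (g \<tau>))"] U_0 U_p s
    by (simp add: y_def inner_Pair3_zero)
  moreover have "(\<Sum>t=1..p-1. (a t + fst (g t) + fst (snd (g (t+1)))) \<bullet> y t) = 0"
    using balance by simp
  ultimately show ?thesis by (simp add: y_def inner_add_left distrib_left sum.distrib)
qed

lemma edge_inner_ge:
  assumes \<tau>: "\<tau> \<in> {1..p}" "\<tau> \<noteq> s" and \<rho>: "\<rho> \<tau> > 0" "\<rho> (\<tau>-1) > 0"
    and step: "\<rho> (\<tau>-1) = \<rho> \<tau> \<or> \<rho> (\<tau>-1) = lam\<^sup>2 * \<rho> \<tau> \<or> \<rho> \<tau> = lam\<^sup>2 * \<rho> (\<tau>-1)"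
  shows "g \<tau> \<bullet> (\<rho> \<tau> *\<^sub>R U \<tau>, \<rho> (\<tau>-1) *\<^sub>R U (\<tau>-1), 0) \<ge> - (mu/2) * of_bool (\<rho> (\<tau>-1) \<noteq> \<rho> \<tau>)
      * (\<rho> \<tau> * (norm (U \<tau>))\<^sup>2 + \<rho> (\<tau>-1) * (norm (U (\<tau>-1)))\<^sup>2)"
proof -
  have co: "g \<tau> \<bullet> (U \<tau>, U (\<tau>-1), 0) \<ge> (norm (g \<tau>))\<^sup>2 / l"
    using edge_cocoercive[OF \<tau>(1)] \<tau>(2) by simp
  show ?thesis
  proof (cases "\<rho> (\<tau>-1) = \<rho> \<tau>")
    case True
    have "g \<tau> \<bullet> (U \<tau>, U (\<tau>-1), 0) \<ge> 0"
      using co l by (meson divide_nonneg_pos order_trans zero_le_power2)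
    then show ?thesis using True \<rho> by (simp add: inner_Pair3_zero flip: distrib_left)
  next
    case False
    then show ?thesis
      using cocoercive_inner_rescaled_ge[OF l mu lam co \<rho>] step by simp
  qed
qed

lemma source_edge_inner_ge:
  "g s \<bullet> (U s, U (s-1), 0) \<ge> - (l * norm \<delta> * norm (U s, U (s-1), 0::'b))"
proof -
  have "g s \<bullet> ((U s, U (s-1), 0) + \<delta>) \<ge> (norm (g s))\<^sup>2 / l"
    using edge_cocoercive[OF s] by (simp only: simp_thms if_True)
  then show ?thesis by (rule cocoercive_inner_shifted_ge[OF l])
qed

text \<open>Testing the balance equations against \<open>\<rho> t *\<^sub>R U t\<close>: every edge across which the weights jump
  costs at most \<open>mu/2\<close> of the weighted energy at each of its ends.\<close>

lemma weighted_energy_inequality: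
  assumes \<rho>: "\<And>t. \<rho> t > 0" and \<rho>_s: "\<rho> (s-1) = \<rho> s"
    and steps: "\<And>\<tau>. \<tau> \<in> {1..p} \<Longrightarrow> \<rho> (\<tau>-1) = \<rho> \<tau> \<or> \<rho> (\<tau>-1) = lam\<^sup>2 * \<rho> \<tau> \<or> \<rho> \<tau> = lam\<^sup>2 * \<rho> (\<tau>-1)"
  shows "(\<Sum>t=1..p-1. (mu - mu/2 * (of_bool (\<rho> (t-1) \<noteq> \<rho> t) + of_bool (\<rho> t \<noteq> \<rho> (t+1))))
      * (\<rho> t * (norm (U t))\<^sup>2)) \<le> \<rho> s * (l * norm \<delta> * norm (U s, U (s-1), 0::'b))"
    (is "_ \<le> ?src")
proof -
  define N where "N t = (norm (U t))\<^sup>2" for t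
  define k where "k \<tau> = (of_bool (\<rho> (\<tau>-1) \<noteq> \<rho> \<tau>) :: real)" for \<tau>
  have edges: "g \<tau> \<bullet> (\<rho> \<tau> *\<^sub>R U \<tau>, \<rho> (\<tau>-1) *\<^sub>R U (\<tau>-1), 0)
      \<ge> - mu/2 * (k \<tau> * (\<rho> \<tau> * N \<tau> + \<rho> (\<tau>-1) * N (\<tau>-1))) - (if \<tau> = s then ?src else 0)"
    if \<tau>: "\<tau> \<in> {1..p}" for \<tau>
  proof (cases "\<tau> = s")
    case True
    have "\<rho> s * (g s \<bullet> (U s, U (s-1), 0)) \<ge> - ?src"
      using mult_left_mono[OF source_edge_inner_ge, of "\<rho> s"] \<rho>[of s] by simp
    then show ?thesis using True \<rho>_s by (simp add: k_def inner_Pair3_zero flip: distrib_left)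
  next
    case False
    then show ?thesis
      using edge_inner_ge[OF \<tau> False \<rho> \<rho> steps[OF \<tau>]] by (simp add: k_def N_def)
  qed
  have regroup: "(\<Sum>\<tau>=1..p. k \<tau> * (\<rho> \<tau> * N \<tau> + \<rho> (\<tau>-1) * N (\<tau>-1)))
      = (\<Sum>t=1..p-1. (k t + k (t+1)) * (\<rho> t * N t))"
    using sum_chain_edges[of "\<lambda>t. \<rho> t * N t" p k k] U_0 U_p s by (simp add: N_def distrib_left)
  have q_sum: "(\<Sum>t=1..p-1. (mu - mu/2 * (k t + k (t+1))) * (\<rho> t * N t))
      = (\<Sum>t=1..p-1. mu * (\<rho> t * N t)) - mu/2 * (\<Sum>t=1..p-1. (k t + k (t+1)) * (\<rho> t * N t))"
    by (simp add: left_diff_distrib sum_subtractf sum_distrib_left mult.assoc)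
  have "- mu/2 * (\<Sum>t=1..p-1. (k t + k (t+1)) * (\<rho> t * N t)) - ?src
      = - mu/2 * (\<Sum>\<tau>=1..p. k \<tau> * (\<rho> \<tau> * N \<tau> + \<rho> (\<tau>-1) * N (\<tau>-1)))
        - (\<Sum>\<tau>=1..p. if \<tau> = s then ?src else 0)"
    by (simp only: regroup sum.delta finite_atLeastAtMost s if_True)
  also have "\<dots> = (\<Sum>\<tau>=1..p. - mu/2 * (k \<tau> * (\<rho> \<tau> * N \<tau> + \<rho> (\<tau>-1) * N (\<tau>-1)))
      - (if \<tau> = s then ?src else 0))"
    by (simp add: sum_subtractf sum_distrib_left)
  also have "\<dots> \<le> (\<Sum>\<tau>=1..p. g \<tau> \<bullet> (\<rho> \<tau> *\<^sub>R U \<tau>, \<rho> (\<tau>-1) *\<^sub>R U (\<tau>-1), 0))"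
    using edges by (intro sum_mono) auto
  also have "\<dots> = - (\<Sum>t=1..p-1. \<rho> t * (a t \<bullet> U t))"
    using weighted_balance[of \<rho>] by linarith
  also have "\<dots> \<le> - (\<Sum>t=1..p-1. mu * (\<rho> t * N t))"
  proof -
    have "mu * (\<rho> t * N t) \<le> \<rho> t * (a t \<bullet> U t)" if "t \<in> {1..p-1}" for t
      using mult_left_mono[OF site_monotone[OF that], of "\<rho> t"] \<rho>[of t]
      by (simp add: N_def mult.left_commute)
    then have "(\<Sum>t=1..p-1. mu * (\<rho> t * N t)) \<le> (\<Sum>t=1..p-1. \<rho> t * (a t \<bullet> U t))"
      by (rule sum_mono)
    then show ?thesis by simp
  qed
  finally have "(\<Sum>t=1..p-1. (mu - mu/2 * (k t + k (t+1))) * (\<rho> t * N t)) \<le> ?src"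
    using q_sum by linarith
  then show ?thesis by (simp add: N_def k_def)
qed

lemma weighted_energy_bound:
  assumes \<rho>: "\<And>t. \<rho> t > 0" and \<rho>_s: "\<rho> (s-1) = \<rho> s"
    and steps: "\<And>\<tau>. \<tau> \<in> {1..p} \<Longrightarrow> \<rho> (\<tau>-1) = \<rho> \<tau> \<or> \<rho> (\<tau>-1) = lam\<^sup>2 * \<rho> \<tau> \<or> \<rho> \<tau> = lam\<^sup>2 * \<rho> (\<tau>-1)"
    and T: "T \<subseteq> {..p}" "\<And>t. t \<in> T \<Longrightarrow> \<rho> (t-1) = \<rho> t \<or> \<rho> t = \<rho> (t+1)"
  shows "mu / 2 * (\<Sum>t\<in>T. \<rho> t * (norm (U t))\<^sup>2) \<le> \<rho> s * (l * norm \<delta> * norm (U s, U (s-1), 0::'b))"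
proof -
  define q where "q t = (mu - mu/2 * (of_bool (\<rho> (t-1) \<noteq> \<rho> t) + of_bool (\<rho> t \<noteq> \<rho> (t+1))))
      * (\<rho> t * (norm (U t))\<^sup>2)" for t
  have q_nonneg: "q t \<ge> 0" for t
    using mu \<rho>[of t] by (simp add: q_def)
  have "mu/2 * (\<rho> t * (norm (U t))\<^sup>2) \<le> q t" if "t \<in> T" for t
  proof -
    from T(2)[OF that] have "of_bool (\<rho> (t-1) \<noteq> \<rho> t) + of_bool (\<rho> t \<noteq> \<rho> (t+1)) \<le> (1::real)" by auto
    then have "mu/2 \<le> mu - mu/2 * (of_bool (\<rho> (t-1) \<noteq> \<rho> t) + of_bool (\<rho> t \<noteq> \<rho> (t+1)))"
      using mult_left_mono[of _ 1 "mu/2"] mu by simp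
    from mult_right_mono[OF this, of "\<rho> t * (norm (U t))\<^sup>2"] show ?thesis
      using \<rho>[of t] by (simp add: q_def)
  qed
  then have "(\<Sum>t\<in>T. mu/2 * (\<rho> t * (norm (U t))\<^sup>2)) \<le> (\<Sum>t\<in>T. q t)"
    by (rule sum_mono)
  also have "\<dots> \<le> (\<Sum>t\<in>{..p}. q t)"
    using T(1) q_nonneg by (intro sum_mono2) auto
  also have "\<dots> = (\<Sum>t=1..p-1. q t)"
  proof (rule sum.mono_neutral_right)
    show "\<forall>i\<in>{..p} - {1..p-1}. q i = 0"
    proof
      fix i assume "i \<in> {..p} - {1..p-1}"
      then have "i = 0 \<or> i = p" by auto
      then show "q i = 0" using U_0 U_p by (auto simp: q_def)
    qed
  qed auto
  also have "\<dots> \<le> \<rho> s * (l * norm \<delta> * norm (U s, U (s-1), 0::'b))"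
    unfolding q_def by (rule weighted_energy_inequality[OF \<rho> \<rho>_s steps])
  finally show ?thesis by (simp add: sum_distrib_left)
qed

lemma decay_estimate:
  assumes h: "h \<le> p"
  shows "norm (U h) \<le> 2 * l / mu * lam ^ edge_dist s h * norm \<delta>"
proof -
  define \<rho> where "\<rho> t = (lam\<^sup>2) ^ weight_exponent s h t" for t
  define T where "T = {s-1, s, h}"
  define S where "S = (\<Sum>t\<in>T. \<rho> t * (norm (U t))\<^sup>2)"
  define n where "n = norm (U s, U (s-1), 0::'b)"
  have \<rho>_pos: "\<rho> t > 0" for t using lam by (simp add: \<rho>_def)
  have terms_nonneg: "\<rho> t * (norm (U t))\<^sup>2 \<ge> 0" for t using \<rho>_pos[of t] by simp
  have "s \<ge> 1" using s by simp
  note e_s = weight_exponent_at_source[OF this, of h]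
  have \<rho>_s: "\<rho> (s-1) = \<rho> s" "\<rho> s = (lam ^ edge_dist s h)\<^sup>2"
    unfolding \<rho>_def e_s by (simp_all add: power2_eq_square power_mult_distrib)
  have \<rho>_h: "\<rho> h = 1" by (simp add: \<rho>_def weight_exponent_at_end)
  have energy: "mu / 2 * S \<le> \<rho> s * (l * norm \<delta> * n)"
    unfolding S_def n_def
  proof (rule weighted_energy_bound)
    show "\<rho> (\<tau>-1) = \<rho> \<tau> \<or> \<rho> (\<tau>-1) = lam\<^sup>2 * \<rho> \<tau> \<or> \<rho> \<tau> = lam\<^sup>2 * \<rho> (\<tau>-1)"
      if "\<tau> \<in> {1..p}" for \<tau>
      using weight_exponent_step[of \<tau> s h] that unfolding \<rho>_def by auto
    show "\<rho> (t-1) = \<rho> t \<or> \<rho> t = \<rho> (t+1)" if "t \<in> T" for t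
    proof -
      have "t = s - 1 \<or> t = s \<or> t = h" using that by (simp add: T_def)
      then show ?thesis
        using \<rho>_s(1) weight_exponent_flat_at[of s h] s unfolding \<rho>_def by auto
    qed
    show "T \<subseteq> {..p}" using s h by (auto simp: T_def)
  qed (fact \<rho>_pos \<rho>_s(1))+
  have lower: "\<rho> s * n\<^sup>2 \<le> S"
  proof -
    have "\<rho> s * n\<^sup>2 = (\<Sum>t\<in>{s-1, s}. \<rho> t * (norm (U t))\<^sup>2)"
      using \<open>s \<ge> 1\<close> \<rho>_s(1) by (simp add: n_def norm_Pair3_power2 algebra_simps)
    also have "\<dots> \<le> S"
      unfolding S_def T_def using terms_nonneg by (intro sum_mono2) auto
    finally show ?thesis .
  qed
  have "S \<ge> 0" unfolding S_def using terms_nonneg by (rule sum_nonneg)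
  from quadratic_self_bound[OF mu \<rho>_pos this energy lower]
  have "S \<le> (lam ^ edge_dist s h * (2 * (l * norm \<delta>) / mu))\<^sup>2"
    unfolding \<rho>_s(2) by (simp only: power_mult_distrib)
  moreover have "(norm (U h))\<^sup>2 \<le> S"
    using member_le_sum[of h T "\<lambda>t. \<rho> t * (norm (U t))\<^sup>2"] terms_nonneg \<rho>_h
    by (simp add: S_def T_def)
  ultimately have "(norm (U h))\<^sup>2 \<le> (lam ^ edge_dist s h * (2 * (l * norm \<delta>) / mu))\<^sup>2"
    by (rule order_trans[rotated])
  then have "norm (U h) \<le> lam ^ edge_dist s h * (2 * (l * norm \<delta>) / mu)"
    by (rule power2_le_imp_le) (use mu l lam in simp)
  also have "\<dots> = 2 * l / mu * lam ^ edge_dist s h * norm \<delta>" by simp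
  finally show ?thesis .
qed

end

definition objective_grad ::
  "(nat \<Rightarrow> 'a::real_inner \<Rightarrow> 'a) \<Rightarrow> (nat \<Rightarrow> 'a \<times> 'a \<times> 'b::real_inner \<Rightarrow> 'a \<times> 'a \<times> 'b) \<Rightarrow> nat
    \<Rightarrow> 'a \<Rightarrow> (nat \<Rightarrow> 'b) \<Rightarrow> 'a \<Rightarrow> (nat \<Rightarrow> 'a) \<Rightarrow> nat \<Rightarrow> 'a" where
  "objective_grad Gf Gc p x0 w xp xs t =
     Gf t (traj p x0 xp xs t) + fst (Gc t (traj p x0 xp xs t, traj p x0 xp xs (t-1), w (t-1)))
     + fst (snd (Gc (t+1) (traj p x0 xp xs (t+1), traj p x0 xp xs t, w t)))"

lemma objective_cong:
  assumes "\<And>t. t \<in> {1..p-1} \<Longrightarrow> xs t = ys t"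
  shows "objective f c p x0 w xp xs = objective f c p x0 w xp ys"
proof -
  have "traj p x0 xp xs \<tau> = traj p x0 xp ys \<tau>" if "\<tau> \<le> p" for \<tau>
    using assms that by (auto simp: traj_def)
  then show ?thesis unfolding objective_def
    by (intro arg_cong2[where f="(+)"] sum.cong refl) auto
qed

lemma inner_add_quadratic_ge:
  fixes v y :: "'a::real_inner"
  assumes "mu > 0"
  shows "v \<bullet> y + mu/2 * (norm y)\<^sup>2 \<ge> mu/4 * (norm y)\<^sup>2 - (norm v)\<^sup>2 / mu"
proof -
  have "0 \<le> (mu/2 * norm y - norm v)\<^sup>2 / mu" using assms by simp
  also have "\<dots> = mu/4 * (norm y)\<^sup>2 - norm v * norm y + (norm v)\<^sup>2 / mu"
    using assms by (simp add: field_simps power2_eq_square)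
  finally show ?thesis using Cauchy_Schwarz_ineq2[of v y] by linarith
qed

lemma has_real_derivative_along_line:
  fixes g :: "'a::real_inner \<Rightarrow> real"
  assumes "(g has_derivative (\<lambda>h. G \<bullet> h)) (at z)"
  shows "((\<lambda>r. g (z + r *\<^sub>R u)) has_real_derivative (G \<bullet> u)) (at 0)"
proof -
  have "((\<lambda>r::real. z + r *\<^sub>R u) has_derivative (\<lambda>r. r *\<^sub>R u)) (at 0)"
    by (auto intro!: derivative_eq_intros)
  moreover have "(g has_derivative (\<lambda>h. G \<bullet> h)) (at (z + 0 *\<^sub>R u))"
    using assms by simp
  ultimately have "((\<lambda>r. g (z + r *\<^sub>R u)) has_derivative (\<lambda>r. G \<bullet> (r *\<^sub>R u))) (at 0)"
    by (rule has_derivative_compose)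
  then have "((\<lambda>r. g (z + r *\<^sub>R u)) has_derivative (\<lambda>r. (G \<bullet> u) * r)) (at 0)"
    by (simp add: mult.commute)
  then show ?thesis by (simp add: has_field_derivative_def)
qed

context
  fixes f :: "nat \<Rightarrow> 'a::euclidean_space \<Rightarrow> real" and c :: "nat \<Rightarrow> 'a \<times> 'a \<times> 'b::euclidean_space \<Rightarrow> real"
    and Gf :: "nat \<Rightarrow> 'a \<Rightarrow> 'a" and Gc :: "nat \<Rightarrow> 'a \<times> 'a \<times> 'b \<Rightarrow> 'a \<times> 'a \<times> 'b"
    and p :: nat and mu :: real
  assumes p: "p \<ge> 1" and mu: "mu > 0"
    and f_deriv: "\<And>\<tau> x. \<tau> \<in> {1..p} \<Longrightarrow> (f \<tau> has_derivative (\<lambda>h. Gf \<tau> x \<bullet> h)) (at x)"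
    and f_strongly_convex:
      "\<And>\<tau> x y. \<tau> \<in> {1..p} \<Longrightarrow> f \<tau> y \<ge> f \<tau> x + Gf \<tau> x \<bullet> (y - x) + mu/2 * (norm (y - x))\<^sup>2"
    and c_deriv: "\<And>\<tau> z. \<tau> \<in> {1..p} \<Longrightarrow> (c \<tau> has_derivative (\<lambda>h. Gc \<tau> z \<bullet> h)) (at z)"
    and c_convex: "\<And>\<tau> z z'. \<tau> \<in> {1..p} \<Longrightarrow> c \<tau> z' \<ge> c \<tau> z + Gc \<tau> z \<bullet> (z' - z)"
begin

lemma objective_ge_first_order:
  "objective f c p x0 w xp ys \<ge> objective f c p x0 w xp xs +
     (\<Sum>t=1..p-1. objective_grad Gf Gc p x0 w xp xs t \<bullet> (ys t - xs t) + mu/2 * (norm (ys t - xs t))\<^sup>2)"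
proof -
  define X where "X = traj p x0 xp xs"
  define Y where "Y = traj p x0 xp ys"
  define D where "D t = (if t \<in> {1..p-1} then ys t - xs t else 0)" for t
  have YX: "Y t - X t = D t" if "t \<le> p" for t
    using that by (auto simp: X_def Y_def D_def traj_def)
  have f_part: "(\<Sum>\<tau>=1..p-1. f \<tau> (X \<tau>) + (Gf \<tau> (X \<tau>) \<bullet> D \<tau> + mu/2 * (norm (D \<tau>))\<^sup>2))
      \<le> (\<Sum>\<tau>=1..p-1. f \<tau> (Y \<tau>))"
  proof (rule sum_mono)
    fix \<tau> assume "\<tau> \<in> {1..p-1}"
    then have \<tau>: "\<tau> \<in> {1..p}" "\<tau> \<le> p" by auto
    show "f \<tau> (X \<tau>) + (Gf \<tau> (X \<tau>) \<bullet> D \<tau> + mu/2 * (norm (D \<tau>))\<^sup>2) \<le> f \<tau> (Y \<tau>)"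
      using f_strongly_convex[OF \<tau>(1), of "X \<tau>" "Y \<tau>"] YX[OF \<tau>(2)] by simp
  qed
  have c_part: "(\<Sum>\<tau>=1..p. c \<tau> (X \<tau>, X (\<tau>-1), w (\<tau>-1)) + Gc \<tau> (X \<tau>, X (\<tau>-1), w (\<tau>-1)) \<bullet> (D \<tau>, D (\<tau>-1), 0))
      \<le> (\<Sum>\<tau>=1..p. c \<tau> (Y \<tau>, Y (\<tau>-1), w (\<tau>-1)))"
  proof (rule sum_mono)
    fix \<tau> assume \<tau>: "\<tau> \<in> {1..p}"
    then have "(Y \<tau>, Y (\<tau>-1), w (\<tau>-1)) - (X \<tau>, X (\<tau>-1), w (\<tau>-1)) = (D \<tau>, D (\<tau>-1), 0)"
      using YX by auto
    with c_convex[OF \<tau>, of "(X \<tau>, X (\<tau>-1), w (\<tau>-1))" "(Y \<tau>, Y (\<tau>-1), w (\<tau>-1))"]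
    show "c \<tau> (X \<tau>, X (\<tau>-1), w (\<tau>-1)) + Gc \<tau> (X \<tau>, X (\<tau>-1), w (\<tau>-1)) \<bullet> (D \<tau>, D (\<tau>-1), 0)
        \<le> c \<tau> (Y \<tau>, Y (\<tau>-1), w (\<tau>-1))"
      by simp
  qed
  have "(\<Sum>\<tau>=1..p. Gc \<tau> (X \<tau>, X (\<tau>-1), w (\<tau>-1)) \<bullet> (D \<tau>, D (\<tau>-1), 0))
      = (\<Sum>t=1..p-1. (fst (Gc t (X t, X (t-1), w (t-1)))
          + fst (snd (Gc (t+1) (X (t+1), X (t+1-1), w (t+1-1))))) \<bullet> D t)"
    unfolding inner_Pair3_zero by (rule sum_chain_edges) (use p in \<open>auto simp: D_def\<close>)
  moreover have "(\<Sum>t=1..p-1. objective_grad Gf Gc p x0 w xp xs t \<bullet> (ys t - xs t) + mu/2 * (norm (ys t - xs t))\<^sup>2)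
     = (\<Sum>t=1..p-1. Gf t (X t) \<bullet> D t + mu/2 * (norm (D t))\<^sup>2) +
       (\<Sum>t=1..p-1. (fst (Gc t (X t, X (t-1), w (t-1)))
          + fst (snd (Gc (t+1) (X (t+1), X (t+1-1), w (t+1-1))))) \<bullet> D t)"
    unfolding sum.distrib[symmetric]
    by (rule sum.cong) (auto simp: objective_grad_def X_def D_def inner_add_left algebra_simps)
  ultimately show ?thesis
    using f_part c_part by (simp add: objective_def X_def Y_def sum.distrib)
qed

lemma cost_term_has_derivative:
  fixes x0 xp v :: 'a and xs :: "nat \<Rightarrow> 'a"
  assumes t: "t \<in> {1..p-1}" and \<tau>: "\<tau> \<in> {1..p}"
  defines "X \<equiv> traj p x0 xp xs"
  shows "((\<lambda>r. c \<tau> (traj p x0 xp (xs(t := xs t + r *\<^sub>R v)) \<tau>,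
      traj p x0 xp (xs(t := xs t + r *\<^sub>R v)) (\<tau>-1), w (\<tau>-1))) has_real_derivative
      (if \<tau> = t then fst (Gc t (X t, X (t-1), w (t-1))) \<bullet> v else 0) +
      (if \<tau> = t+1 then fst (snd (Gc (t+1) (X (t+1), X t, w t))) \<bullet> v else 0)) (at 0)"
proof -
  have t': "t \<in> {1..p}" "t+1 \<in> {1..p}" "t \<noteq> t + 1" "t - 1 \<noteq> t" using t by auto
  have Xr: "traj p x0 xp (xs(t := xs t + r *\<^sub>R v)) \<tau>' = (if \<tau>' = t then X t + r *\<^sub>R v else X \<tau>')"
    for r \<tau>'
    using t by (auto simp: X_def traj_def)
  consider "\<tau> = t" | "\<tau> = t + 1" | "\<tau> \<noteq> t" "\<tau> \<noteq> t + 1" "\<tau> - 1 \<noteq> t"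
    using \<tau> by force
  then show ?thesis
  proof cases
    case 1
    then have "(\<lambda>r. c \<tau> (traj p x0 xp (xs(t := xs t + r *\<^sub>R v)) \<tau>,
        traj p x0 xp (xs(t := xs t + r *\<^sub>R v)) (\<tau>-1), w (\<tau>-1)))
        = (\<lambda>r. c t ((X t, X (t-1), w (t-1)) + r *\<^sub>R (v, 0, 0)))"
      using t' by (simp add: Xr)
    then show ?thesis
      using has_real_derivative_along_line[OF c_deriv[OF t'(1)], of "(X t, X (t-1), w (t-1))" "(v, 0, 0)"] 1 t'
      by (simp add: inner_Pair3_zero)
  next
    case 2
    then have "(\<lambda>r. c \<tau> (traj p x0 xp (xs(t := xs t + r *\<^sub>R v)) \<tau>,
        traj p x0 xp (xs(t := xs t + r *\<^sub>R v)) (\<tau>-1), w (\<tau>-1)))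
        = (\<lambda>r. c (t+1) ((X (t+1), X t, w t) + r *\<^sub>R (0, v, 0)))"
      using t' by (simp add: Xr)
    then show ?thesis
      using has_real_derivative_along_line[OF c_deriv[OF t'(2)], of "(X (t+1), X t, w t)" "(0, v, 0)"] 2 t'
      by (simp add: inner_Pair3_zero)
  next
    case 3
    then show ?thesis by (simp add: Xr)
  qed
qed

lemma objective_has_derivative_along_state:
  assumes t: "t \<in> {1..p-1}"
  shows "((\<lambda>r. objective f c p x0 w xp (xs(t := xs t + r *\<^sub>R v))) has_real_derivative
    objective_grad Gf Gc p x0 w xp xs t \<bullet> v) (at 0)"
proof -
  define X where "X = traj p x0 xp xs"
  have t': "t \<in> {1..p}" "t + 1 \<le> p" "t - 1 \<noteq> t" "t + 1 - 1 = t" using t by auto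
  have f_term: "((\<lambda>r. f \<tau> (traj p x0 xp (xs(t := xs t + r *\<^sub>R v)) \<tau>)) has_real_derivative
      (if \<tau> = t then Gf t (X t) \<bullet> v else 0)) (at 0)" for \<tau>
  proof -
    have "traj p x0 xp (xs(t := xs t + r *\<^sub>R v)) \<tau> = (if \<tau> = t then X t + r *\<^sub>R v else X \<tau>)" for r
      using t by (auto simp: X_def traj_def)
    then show ?thesis
      using has_real_derivative_along_line[OF f_deriv[OF t'(1)], of "X t" v] by simp
  qed
  have c_term: "((\<lambda>r. c \<tau> (traj p x0 xp (xs(t := xs t + r *\<^sub>R v)) \<tau>,
      traj p x0 xp (xs(t := xs t + r *\<^sub>R v)) (\<tau>-1), w (\<tau>-1))) has_real_derivative
      (if \<tau> = t then fst (Gc t (X t, X (t-1), w (t-1))) \<bullet> v else 0) +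
      (if \<tau> = t+1 then fst (snd (Gc (t+1) (X (t+1), X t, w t))) \<bullet> v else 0)) (at 0)"
    if "\<tau> \<in> {1..p}" for \<tau>
    unfolding X_def by (rule cost_term_has_derivative[OF t that])
  have "((\<lambda>r. objective f c p x0 w xp (xs(t := xs t + r *\<^sub>R v))) has_real_derivative
      ((\<Sum>\<tau>=1..p-1. if \<tau> = t then Gf t (X t) \<bullet> v else 0) +
       (\<Sum>\<tau>=1..p. (if \<tau> = t then fst (Gc t (X t, X (t-1), w (t-1))) \<bullet> v else 0) +
                   (if \<tau> = t+1 then fst (snd (Gc (t+1) (X (t+1), X t, w t))) \<bullet> v else 0)))) (at 0)"
    unfolding objective_def by (intro DERIV_add DERIV_sum f_term c_term) auto
  also have "(\<Sum>\<tau>=1..p-1. if \<tau> = t then Gf t (X t) \<bullet> v else 0) +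
       (\<Sum>\<tau>=1..p. (if \<tau> = t then fst (Gc t (X t, X (t-1), w (t-1))) \<bullet> v else 0) +
                   (if \<tau> = t+1 then fst (snd (Gc (t+1) (X (t+1), X t, w t))) \<bullet> v else 0))
      = objective_grad Gf Gc p x0 w xp xs t \<bullet> v"
    using t t' by (simp add: sum.distrib objective_grad_def X_def inner_add_left)
  finally show ?thesis .
qed

lemma objective_grad_eq_0_if_minimal:
  assumes min: "\<And>ys. objective f c p x0 w xp xs \<le> objective f c p x0 w xp ys"
    and t: "t \<in> {1..p-1}"
  shows "objective_grad Gf Gc p x0 w xp xs t = 0"
proof -
  define g where "g = objective_grad Gf Gc p x0 w xp xs t"
  have "((\<lambda>r. objective f c p x0 w xp (xs(t := xs t + r *\<^sub>R g))) has_real_derivative g \<bullet> g) (at 0)"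
    unfolding g_def by (rule objective_has_derivative_along_state[OF t])
  from DERIV_local_min[OF this zero_less_one] min have "g \<bullet> g = 0" by simp
  then show ?thesis by (simp add: g_def)
qed

lemma continuous_on_objective: "continuous_on UNIV (objective f c p x0 w xp)"
proof -
  have traj: "continuous_on UNIV (\<lambda>xs::nat \<Rightarrow> 'a. traj p x0 xp xs \<tau>)" for \<tau>
    by (cases "\<tau> = 0"; cases "\<tau> = p") (simp_all add: traj_def)
  have f: "continuous_on UNIV (f \<tau>)" and c: "continuous_on UNIV (c \<tau>)" if "\<tau> \<in> {1..p}" for \<tau>
    using has_derivative_continuous[OF f_deriv[OF that]] has_derivative_continuous[OF c_deriv[OF that]]
    by (simp_all add: continuous_at_imp_continuous_on)
  show ?thesis
    unfolding objective_def
  proof (intro continuous_on_add continuous_on_sum)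
    fix \<tau> :: nat assume "\<tau> \<in> {1..p-1}"
    then show "continuous_on UNIV (\<lambda>xs. f \<tau> (traj p x0 xp xs \<tau>))"
      using continuous_on_compose2[OF f traj] by auto
  next
    fix \<tau> :: nat assume \<tau>: "\<tau> \<in> {1..p}"
    have "continuous_on UNIV (\<lambda>xs::nat \<Rightarrow> 'a. (traj p x0 xp xs \<tau>, traj p x0 xp xs (\<tau>-1), w (\<tau>-1)))"
      by (intro continuous_on_Pair traj continuous_on_const)
    then show "continuous_on UNIV (\<lambda>xs. c \<tau> (traj p x0 xp xs \<tau>, traj p x0 xp xs (\<tau>-1), w (\<tau>-1)))"
      using continuous_on_compose2[OF c[OF \<tau>]] by auto
  qed
qed

lemma objective_quadratic_growth:
  "objective f c p x0 w xp (\<lambda>_. 0)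
    + (\<Sum>t=1..p-1. mu/4 * (norm (ys t))\<^sup>2 - (norm (objective_grad Gf Gc p x0 w xp (\<lambda>_. 0) t))\<^sup>2 / mu)
    \<le> objective f c p x0 w xp ys"
proof -
  have "(\<Sum>t=1..p-1. mu/4 * (norm (ys t))\<^sup>2 - (norm (objective_grad Gf Gc p x0 w xp (\<lambda>_. 0) t))\<^sup>2 / mu)
      \<le> (\<Sum>t=1..p-1. objective_grad Gf Gc p x0 w xp (\<lambda>_. 0) t \<bullet> (ys t - 0) + mu/2 * (norm (ys t - 0))\<^sup>2)"
    using inner_add_quadratic_ge[OF mu] by (intro sum_mono) simp
  moreover have "objective f c p x0 w xp (\<lambda>_. 0)
      + (\<Sum>t=1..p-1. objective_grad Gf Gc p x0 w xp (\<lambda>_. 0) t \<bullet> (ys t - 0) + mu/2 * (norm (ys t - 0))\<^sup>2)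
      \<le> objective f c p x0 w xp ys"
    by (rule objective_ge_first_order)
  ultimately show ?thesis by linarith
qed

text \<open>Outside a product of balls the objective exceeds its value at \<open>0\<close>; such a product is compact
  in the product topology.\<close>

lemma objective_has_minimiser: "\<exists>xs. \<forall>ys. objective f c p x0 w xp xs \<le> objective f c p x0 w xp ys"
proof -
  define F where "F = objective f c p x0 w xp"
  define M where "M = (\<Sum>t=1..p-1. (norm (objective_grad Gf Gc p x0 w xp (\<lambda>_. 0) t))\<^sup>2 / mu)"
  define R where "R = 1 + 4 * M / mu"
  define S where "S = PiE UNIV (\<lambda>t. if t \<in> {1..p-1} then cball 0 R else {0::'a})"
  have M: "M \<ge> 0" using mu by (simp add: M_def sum_nonneg)
  then have R: "R \<ge> 1" using mu by (simp add: R_def)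
  have "compactin (product_topology (\<lambda>_. euclidean) UNIV) S"
    unfolding S_def by (subst compactin_PiE) auto
  then have "compact S" by (simp add: euclidean_product_topology)
  moreover have zero_S: "(\<lambda>_. 0) \<in> S" using R by (auto simp: S_def)
  moreover have "continuous_on S F"
    unfolding F_def by (rule continuous_on_subset[OF continuous_on_objective]) simp
  ultimately obtain xs where xs: "xs \<in> S" "\<And>ys. ys \<in> S \<Longrightarrow> F xs \<le> F ys"
    using continuous_attains_inf[of S F] by blast
  have "F xs \<le> F ys" for ys
  proof -
    define ys' where "ys' t = (if t \<in> {1..p-1} then ys t else 0)" for t
    have "F ys' = F ys" unfolding F_def by (rule objective_cong) (simp add: ys'_def)
    moreover have "F xs \<le> F ys'"
    proof (cases "ys' \<in> S")
      case False
      have "\<exists>k\<in>{1..p-1}. norm (ys k) > R"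
      proof (rule ccontr)
        assume "\<not> (\<exists>k\<in>{1..p-1}. norm (ys k) > R)"
        then have "ys' \<in> S" by (auto simp: S_def ys'_def PiE_UNIV_domain not_less)
        with False show False by simp
      qed
      then obtain k where k: "k \<in> {1..p-1}" "norm (ys k) > R" by blast
      have "M < mu/4 * R" using mu by (simp add: R_def field_simps)
      also have "\<dots> \<le> mu/4 * R\<^sup>2" using mu R by (simp add: power2_eq_square)
      also have "\<dots> \<le> mu/4 * (norm (ys' k))\<^sup>2"
        using mu R k by (intro mult_left_mono power_mono) (auto simp: ys'_def)
      also have "\<dots> \<le> (\<Sum>t=1..p-1. mu/4 * (norm (ys' t))\<^sup>2)"
        using member_le_sum[of k "{1..p-1}" "\<lambda>t. mu/4 * (norm (ys' t))\<^sup>2"] k mu by simp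
      finally have "F (\<lambda>_. 0) \<le> F ys'"
        using objective_quadratic_growth[of x0 w xp ys'] by (simp add: F_def M_def sum_subtractf)
      then show ?thesis using xs zero_S by fastforce
    qed (use xs in auto)
    ultimately show ?thesis by simp
  qed
  then show ?thesis unfolding F_def by blast
qed

lemma psi_minimal: "objective f c p x0 w xp (psi f c p x0 w xp) \<le> objective f c p x0 w xp ys"
  using someI_ex[OF objective_has_minimiser] unfolding psi_def by blast

lemma psi_stationary:
  "t \<in> {1..p-1} \<Longrightarrow> objective_grad Gf Gc p x0 w xp (psi f c p x0 w xp) t = 0"
  by (rule objective_grad_eq_0_if_minimal[OF psi_minimal])

end

lemma traj_edge_diff:
  fixes x0 x0' xp xp' :: "'a::ab_group_add" and w w' :: "nat \<Rightarrow> 'b::ab_group_add"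
  assumes p: "p \<ge> 1" and \<tau>: "\<tau> \<in> {1..p}"
    and U: "\<And>t. t \<in> {1..p-1} \<Longrightarrow> U t = xs t - xs' t" "U 0 = 0" "U p = 0"
    and same_w: "\<And>\<tau>. \<tau> \<in> {1..p} \<Longrightarrow> \<tau> \<noteq> s \<Longrightarrow> w (\<tau>-1) = w' (\<tau>-1)"
    and same_x0: "s \<noteq> 1 \<Longrightarrow> x0 = x0'" and same_xp: "s \<noteq> p \<Longrightarrow> xp = xp'"
  shows "(traj p x0 xp xs \<tau>, traj p x0 xp xs (\<tau>-1), w (\<tau>-1))
      - (traj p x0' xp' xs' \<tau>, traj p x0' xp' xs' (\<tau>-1), w' (\<tau>-1))
    = (U \<tau>, U (\<tau>-1), 0) + (if \<tau> = s then (xp - xp', x0 - x0', w (s-1) - w' (s-1)) else 0)"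
proof -
  have U': "U t = xs t - xs' t" if "0 < t" "t < p" for t
    using that by (intro U(1)) auto
  have diff: "traj p x0 xp xs t - traj p x0' xp' xs' t
      = (if t = 0 then x0 - x0' else if t = p then xp - xp' else U t)" if "t \<le> p" for t
    using that U' by (auto simp: traj_def)
  have "traj p x0 xp xs \<tau> - traj p x0' xp' xs' \<tau> = U \<tau> + (if \<tau> = s then xp - xp' else 0)"
    using diff[of \<tau>] \<tau> same_xp U(3) by auto
  moreover have "traj p x0 xp xs (\<tau>-1) - traj p x0' xp' xs' (\<tau>-1) = U (\<tau>-1) + (if \<tau> = s then x0 - x0' else 0)"
    using diff[of "\<tau>-1"] \<tau> same_x0 U(2) p by auto
  moreover have "w (\<tau>-1) - w' (\<tau>-1) = (if \<tau> = s then w (s-1) - w' (s-1) else 0)"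
    using same_w[OF \<tau>] by auto
  ultimately show ?thesis by (cases "\<tau> = s") simp_all
qed

context
  fixes f :: "nat \<Rightarrow> 'a::euclidean_space \<Rightarrow> real" and c :: "nat \<Rightarrow> 'a \<times> 'a \<times> 'b::euclidean_space \<Rightarrow> real"
    and Gf :: "nat \<Rightarrow> 'a \<Rightarrow> 'a" and Gc :: "nat \<Rightarrow> 'a \<times> 'a \<times> 'b \<Rightarrow> 'a \<times> 'a \<times> 'b"
    and p :: nat and mu l lam :: real
  assumes p: "p \<ge> 1" and mu: "mu > 0" and l: "l > 0"
    and lam: "lam > 0" "2 * lam * (1 + mu / l) = 1 + lam\<^sup>2"
    and f_deriv: "\<And>\<tau> x. \<tau> \<in> {1..p} \<Longrightarrow> (f \<tau> has_derivative (\<lambda>h. Gf \<tau> x \<bullet> h)) (at x)"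
    and f_strongly_convex:
      "\<And>\<tau> x y. \<tau> \<in> {1..p} \<Longrightarrow> f \<tau> y \<ge> f \<tau> x + Gf \<tau> x \<bullet> (y - x) + mu/2 * (norm (y - x))\<^sup>2"
    and c_deriv: "\<And>\<tau> z. \<tau> \<in> {1..p} \<Longrightarrow> (c \<tau> has_derivative (\<lambda>h. Gc \<tau> z \<bullet> h)) (at z)"
    and c_convex: "\<And>\<tau> z z'. \<tau> \<in> {1..p} \<Longrightarrow> c \<tau> z' \<ge> c \<tau> z + Gc \<tau> z \<bullet> (z' - z)"
    and c_smooth:
      "\<And>\<tau> z z'. \<tau> \<in> {1..p} \<Longrightarrow> c \<tau> z' \<le> c \<tau> z + Gc \<tau> z \<bullet> (z' - z) + l/2 * (norm (z' - z))\<^sup>2"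
begin


lemma psi_perturbed_chain:
  fixes x0 x0' xp xp' :: 'a and w w' :: "nat \<Rightarrow> 'b"
  assumes s: "s \<in> {1..p}"
    and same_w: "\<And>\<tau>. \<tau> \<in> {1..p} \<Longrightarrow> \<tau> \<noteq> s \<Longrightarrow> w (\<tau>-1) = w' (\<tau>-1)"
    and same_x0: "s \<noteq> 1 \<Longrightarrow> x0 = x0'" and same_xp: "s \<noteq> p \<Longrightarrow> xp = xp'"
  defines "X \<equiv> traj p x0 xp (psi f c p x0 w xp)" and "X' \<equiv> traj p x0' xp' (psi f c p x0' w' xp')"
  shows "perturbed_chain p s mu l lam (\<lambda>t. if t \<in> {1..p-1} then X t - X' t else 0)
    (\<lambda>t. Gf t (X t) - Gf t (X' t))
    (\<lambda>\<tau>. Gc \<tau> (X \<tau>, X (\<tau>-1), w (\<tau>-1)) - Gc \<tau> (X' \<tau>, X' (\<tau>-1), w' (\<tau>-1)))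
    (xp - xp', x0 - x0', w (s-1) - w' (s-1))"
proof -
  define U where "U = (\<lambda>t. if t \<in> {1..p-1} then X t - X' t else 0)"
  define Z where "Z = (\<lambda>\<tau>. (X \<tau>, X (\<tau>-1), w (\<tau>-1)))"
  define Z' where "Z' = (\<lambda>\<tau>. (X' \<tau>, X' (\<tau>-1), w' (\<tau>-1)))"
  have "perturbed_chain p s mu l lam U (\<lambda>t. Gf t (X t) - Gf t (X' t))
    (\<lambda>\<tau>. Gc \<tau> (Z \<tau>) - Gc \<tau> (Z' \<tau>)) (xp - xp', x0 - x0', w (s-1) - w' (s-1))"
  proof
    show "(Gf t (X t) - Gf t (X' t)) \<bullet> U t \<ge> mu * (norm (U t))\<^sup>2" if "t \<in> {1..p-1}" for t
    proof -
      from that have "t \<in> {1..p}" by auto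
      from gradient_strongly_monotone[OF f_strongly_convex[OF this]] show ?thesis
        using that by (simp add: U_def)
    qed
    show "(Gc \<tau> (Z \<tau>) - Gc \<tau> (Z' \<tau>)) \<bullet> ((U \<tau>, U (\<tau>-1), 0) + (if \<tau> = s then (xp - xp', x0 - x0', w (s-1) - w' (s-1)) else 0))
        \<ge> (norm (Gc \<tau> (Z \<tau>) - Gc \<tau> (Z' \<tau>)))\<^sup>2 / l" if \<tau>: "\<tau> \<in> {1..p}" for \<tau>
    proof -
      have "Z \<tau> - Z' \<tau> = (U \<tau>, U (\<tau>-1), 0) + (if \<tau> = s then (xp - xp', x0 - x0', w (s-1) - w' (s-1)) else 0)"
        unfolding Z_def Z'_def X_def X'_def
        by (rule traj_edge_diff[where w = w and w' = w', OF p \<tau> _ _ _ same_w same_x0 same_xp]) (use p in \<open>auto simp: U_def X_def X'_def traj_def\<close>)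
      moreover have "(Gc \<tau> (Z \<tau>) - Gc \<tau> (Z' \<tau>)) \<bullet> (Z \<tau> - Z' \<tau>) \<ge> (norm (Gc \<tau> (Z \<tau>) - Gc \<tau> (Z' \<tau>)))\<^sup>2 / l"
        by (rule gradient_cocoercive[OF l c_convex[OF \<tau>] c_smooth[OF \<tau>]])
      ultimately show ?thesis by simp
    qed
    show "Gf t (X t) - Gf t (X' t) + fst (Gc t (Z t) - Gc t (Z' t))
        + fst (snd (Gc (t+1) (Z (t+1)) - Gc (t+1) (Z' (t+1)))) = 0" if t: "t \<in> {1..p-1}" for t
    proof -
      note stationary = psi_stationary[OF p mu f_deriv f_strongly_convex c_deriv c_convex t]
      have "objective_grad Gf Gc p x0 w xp (psi f c p x0 w xp) t = 0" by (rule stationary)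
      moreover have "objective_grad Gf Gc p x0' w' xp' (psi f c p x0' w' xp') t = 0" by (rule stationary)
      ultimately have "(Gf t (X t) + fst (Gc t (Z t)) + fst (snd (Gc (t+1) (Z (t+1)))))
          - (Gf t (X' t) + fst (Gc t (Z' t)) + fst (snd (Gc (t+1) (Z' (t+1))))) = 0"
        by (simp add: objective_grad_def X_def X'_def Z_def Z'_def)
      then show ?thesis by (simp add: algebra_simps)
    qed
  qed (use mu l lam s p in \<open>auto simp: U_def\<close>)
  then show ?thesis by (simp only: U_def Z_def Z'_def)
qed

lemma psi_edge_perturbation:
  assumes s: "s \<in> {1..p}" and h: "h \<in> {1..p-1}"
    and same_w: "\<And>\<tau>. \<tau> \<in> {1..p} \<Longrightarrow> \<tau> \<noteq> s \<Longrightarrow> w (\<tau>-1) = w' (\<tau>-1)"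
    and same_x0: "s \<noteq> 1 \<Longrightarrow> x0 = x0'" and same_xp: "s \<noteq> p \<Longrightarrow> xp = xp'"
  shows "norm (psi f c p x0 w xp h - psi f c p x0' w' xp' h) \<le> 2 * l / mu * lam ^ edge_dist s h
    * (norm (xp - xp') + norm (x0 - x0') + norm (w (s-1) - w' (s-1)))"
proof -
  have "h \<le> p" "h \<noteq> 0" "h \<noteq> p" using h by auto
  from perturbed_chain.decay_estimate[OF psi_perturbed_chain[where w = w and w' = w', OF s same_w same_x0 same_xp] this(1)] this(2,3) h
  have "norm (psi f c p x0 w xp h - psi f c p x0' w' xp' h)
      \<le> 2 * l / mu * lam ^ edge_dist s h * norm (xp - xp', x0 - x0', w (s-1) - w' (s-1))"
    by (auto simp: traj_def)
  also have "\<dots> \<le> 2 * l / mu * lam ^ edge_dist s h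
      * (norm (xp - xp') + norm (x0 - x0') + norm (w (s-1) - w' (s-1)))"
    using norm_Pair_le[of "xp - xp'" "(x0 - x0', w (s-1) - w' (s-1))"]
      norm_Pair_le[of "x0 - x0'" "w (s-1) - w' (s-1)"] mu l lam
    by (intro mult_left_mono) auto
  finally show ?thesis .
qed

text \<open>Change the data one edge at a time, from edge \<open>1\<close> to edge \<open>p\<close>. The \<open>k\<close>-th hybrid takes
  the primed data on the edges up to \<open>k\<close>; for \<open>k = p\<close> it is exactly \<open>w'\<close>, including the entries
  beyond \<open>p - 1\<close> that the objective ignores.\<close>

lemma psi_sensitivity:
  assumes h: "h \<in> {1..p-1}"
  shows "norm (psi f c p x0 w xp h - psi f c p x0' w' xp' h)
    \<le> 2 * l / mu * (lam ^ (h - 1) * norm (x0 - x0')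
        + (\<Sum>\<tau><p. lam ^ edge_dist (\<tau>+1) h * norm (w \<tau> - w' \<tau>))
        + lam ^ (p - 1 - h) * norm (xp - xp'))"
proof -
  define A where "A k = (if k = 0 then x0 else x0')" for k :: nat
  define W where "W k = (if k = p then w' else (\<lambda>\<tau>. if \<tau> < k then w' \<tau> else w \<tau>))" for k
  define B where "B k = (if k = p then xp' else xp)" for k
  define Y where "Y k = psi f c p (A k) (W k) (B k) h" for k
  define b where "b k = 2 * l / mu * (lam ^ edge_dist (Suc k) h * norm (w k - w' k))
      + (if k = 0 then 2 * l / mu * (lam ^ (h - 1) * norm (x0 - x0')) else 0)
      + (if k = p - 1 then 2 * l / mu * (lam ^ (p - 1 - h) * norm (xp - xp')) else 0)" for k
  have step: "norm (Y k - Y (Suc k)) \<le> b k" if k: "k < p" for k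
  proof -
    have "Suc k \<in> {1..p}" using k by simp
    moreover have "W k (\<tau>-1) = W (Suc k) (\<tau>-1)" if "\<tau> \<in> {1..p}" "\<tau> \<noteq> Suc k" for \<tau>
      using that k by (auto simp: W_def)
    moreover have "A k = A (Suc k)" if "Suc k \<noteq> 1" using that by (simp add: A_def)
    moreover have "B k = B (Suc k)" if "Suc k \<noteq> p" using that k by (simp add: B_def)
    ultimately have "norm (Y k - Y (Suc k)) \<le> 2 * l / mu * lam ^ edge_dist (Suc k) h
        * (norm (B k - B (Suc k)) + norm (A k - A (Suc k)) + norm (W k (Suc k - 1) - W (Suc k) (Suc k - 1)))"
      unfolding Y_def by (rule psi_edge_perturbation[OF _ h])
    also have "\<dots> = b k"
    proof -
      have "norm (B k - B (Suc k)) = (if k = p - 1 then norm (xp - xp') else 0)"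
        using k by (auto simp: B_def)
      moreover have "norm (A k - A (Suc k)) = (if k = 0 then norm (x0 - x0') else 0)"
        by (simp add: A_def)
      moreover have "W k (Suc k - 1) - W (Suc k) (Suc k - 1) = w k - w' k"
        using k by (simp add: W_def)
      moreover have "edge_dist (Suc k) h = h - 1" if "k = 0" using that h by (simp add: edge_dist_def)
      moreover have "edge_dist (Suc k) h = p - 1 - h" if "k = p - 1" using that h k by (simp add: edge_dist_def)
      moreover have "p \<ge> 2" using h by auto
      ultimately show ?thesis by (simp add: b_def distrib_left)
    qed
    finally show ?thesis .
  qed
  have "Y 0 = psi f c p x0 w xp h" "Y p = psi f c p x0' w' xp' h"
    using p by (simp_all add: Y_def A_def B_def W_def)
  then have "norm (psi f c p x0 w xp h - psi f c p x0' w' xp' h) = norm (\<Sum>k<p. Y k - Y (Suc k))"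
    by (simp add: sum_lessThan_telescope')
  also have "\<dots> \<le> (\<Sum>k<p. b k)"
    using step by (intro order_trans[OF norm_sum] sum_mono) auto
  also have "\<dots> = (\<Sum>k<p. 2 * l / mu * (lam ^ edge_dist (Suc k) h * norm (w k - w' k)))
      + 2 * l / mu * (lam ^ (h - 1) * norm (x0 - x0')) + 2 * l / mu * (lam ^ (p - 1 - h) * norm (xp - xp'))"
    using p by (simp add: b_def sum.distrib)
  also have "\<dots> = 2 * l / mu * (lam ^ (h - 1) * norm (x0 - x0')
        + (\<Sum>\<tau><p. lam ^ edge_dist (\<tau>+1) h * norm (w \<tau> - w' \<tau>))
        + lam ^ (p - 1 - h) * norm (xp - xp'))"
    by (simp add: sum_distrib_left distrib_left)
  finally show ?thesis .
qed

end

lemma decay_rate: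
  fixes mu l :: real
  assumes "mu > 0" "l > 0"
  defines "lam \<equiv> 1 - 2 / (sqrt (1 + 2 * l / mu) + 1)"
  shows "lam > 0" "lam \<le> 1" "2 * lam * (1 + mu / l) = 1 + lam\<^sup>2"
proof -
  define s where "s = sqrt (1 + 2 * l / mu)"
  have s1: "s > 1" using assms by (simp add: s_def)
  then have ne: "s - 1 \<noteq> 0" "s + 1 \<noteq> 0" by auto
  have "lam = 1 - 2 / (s + 1)" by (simp add: lam_def s_def)
  also have "\<dots> = (s - 1) / (s + 1)" using ne by (simp add: field_simps)
  finally have lam_s: "lam = (s - 1) / (s + 1)" .
  then show "lam > 0" "lam \<le> 1" using s1 by simp_all
  have sq: "s\<^sup>2 - 1 = (s - 1) * (s + 1)" by (simp add: power2_eq_square algebra_simps)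
  have d: "s\<^sup>2 - 1 = 2 * l / mu" using assms by (simp add: s_def)
  then have mu_l: "mu / l = 2 / (s\<^sup>2 - 1)" and nz: "s\<^sup>2 - 1 \<noteq> 0" using assms by simp_all
  have "1 + mu / l = (s\<^sup>2 + 1) / (s\<^sup>2 - 1)" unfolding mu_l using nz by (simp add: field_simps)
  then have "2 * lam * (1 + mu / l) = 2 * ((s - 1) / (s + 1)) * ((s\<^sup>2 + 1) / ((s - 1) * (s + 1)))"
    by (simp add: lam_s sq)
  also have "\<dots> = ((s - 1) * (2 * (s\<^sup>2 + 1))) / ((s - 1) * ((s + 1) * (s + 1)))"
    by (simp add: algebra_simps)
  also have "\<dots> = 2 * (s\<^sup>2 + 1) / (s + 1)\<^sup>2"
    using ne by (simp add: power2_eq_square)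
  also have "2 * (s\<^sup>2 + 1) = (s + 1)\<^sup>2 + (s - 1)\<^sup>2"
    by (simp add: power2_eq_square algebra_simps)
  also have "((s + 1)\<^sup>2 + (s - 1)\<^sup>2) / (s + 1)\<^sup>2 = 1 + lam\<^sup>2"
    using ne by (simp add: lam_s power_divide add_divide_distrib)
  finally show "2 * lam * (1 + mu / l) = 1 + lam\<^sup>2" .
qed

lemma gradient_choice:
  assumes "\<And>\<tau>. \<tau> \<in> A \<Longrightarrow> \<exists>G. has_gradient_everywhere (g \<tau>) G \<and> P \<tau> G"
  obtains G where "\<And>\<tau> x. \<tau> \<in> A \<Longrightarrow> (g \<tau> has_derivative (\<lambda>h. G \<tau> x \<bullet> h)) (at x)"
    and "\<And>\<tau>. \<tau> \<in> A \<Longrightarrow> P \<tau> (G \<tau>)"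
proof -
  from assms have "\<forall>\<tau>\<in>A. \<exists>G. has_gradient_everywhere (g \<tau>) G \<and> P \<tau> G" by blast
  from bchoice[OF this] obtain G where "\<forall>\<tau>\<in>A. has_gradient_everywhere (g \<tau>) (G \<tau>) \<and> P \<tau> (G \<tau>)" ..
  then show ?thesis using that unfolding has_gradient_everywhere_def by blast
qed

lemma power_bound_le_power_int_bound:
  fixes lam C a e :: real and b :: "nat \<Rightarrow> real"
  assumes lam: "0 < lam" "lam \<le> 1" and "C \<ge> 0" "a \<ge> 0" "e \<ge> 0" "\<And>\<tau>. b \<tau> \<ge> 0"
    and h: "1 \<le> h" "h < p"
  shows "C * (lam ^ (h - 1) * a + (\<Sum>\<tau><p. lam ^ edge_dist (\<tau>+1) h * b \<tau>) + lam ^ (p - 1 - h) * e)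
    \<le> C * (lam powi (int h - 1) * a + (\<Sum>\<tau>=0..p-1. lam powi (\<bar>int h - int \<tau>\<bar> - 1) * b \<tau>)
        + lam powi (int p - int h - 1) * e)"
proof -
  have "lam ^ edge_dist (\<tau>+1) h * b \<tau> \<le> lam powi (\<bar>int h - int \<tau>\<bar> - 1) * b \<tau>" for \<tau>
  proof (rule mult_right_mono)
    have "\<bar>int h - int \<tau>\<bar> - 1 \<le> int (edge_dist (\<tau>+1) h)" by (auto simp: edge_dist_def)
    from power_int_decreasing[OF this, where a = lam] lam
    show "lam ^ edge_dist (\<tau>+1) h \<le> lam powi (\<bar>int h - int \<tau>\<bar> - 1)" by simp
  qed (fact assms(6))
  then have "(\<Sum>\<tau><p. lam ^ edge_dist (\<tau>+1) h * b \<tau>) \<le> (\<Sum>\<tau><p. lam powi (\<bar>int h - int \<tau>\<bar> - 1) * b \<tau>)"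
    by (rule sum_mono)
  moreover have "{0..p-1} = {..<p}" using h by auto
  ultimately have "(\<Sum>\<tau><p. lam ^ edge_dist (\<tau>+1) h * b \<tau>) \<le> (\<Sum>\<tau>=0..p-1. lam powi (\<bar>int h - int \<tau>\<bar> - 1) * b \<tau>)"
    by (simp only:)
  moreover have "int h - 1 = int (h - 1)" "int p - int h - 1 = int (p - 1 - h)" using h by auto
  then have "lam powi (int h - 1) = lam ^ (h - 1)" "lam powi (int p - int h - 1) = lam ^ (p - 1 - h)"
    by (simp_all only: power_int_of_nat)
  ultimately show ?thesis using assms(3) by (intro mult_left_mono) auto
qed

lemma psi_sensitivity_of_strongly_convex:
  fixes f :: "nat \<Rightarrow> 'a::euclidean_space \<Rightarrow> real" and c :: "nat \<Rightarrow> 'a \<times> 'a \<times> 'b::euclidean_space \<Rightarrow> real"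
  assumes "p \<ge> 1" "mu > 0" "l > 0" "lam > 0" "2 * lam * (1 + mu / l) = 1 + lam\<^sup>2"
    and f: "\<And>\<tau>. \<tau> \<in> {1..p} \<Longrightarrow> strongly_convex mu (f \<tau>)"
    and c: "\<And>\<tau>. \<tau> \<in> {1..p} \<Longrightarrow> convex_on UNIV (c \<tau>) \<and> strongly_smooth l (c \<tau>)"
    and "h \<in> {1..p-1}"
  shows "norm (psi f c p x0 w xp h - psi f c p x0' w' xp' h)
    \<le> 2 * l / mu * (lam ^ (h - 1) * norm (x0 - x0')
        + (\<Sum>\<tau><p. lam ^ edge_dist (\<tau>+1) h * norm (w \<tau> - w' \<tau>))
        + lam ^ (p - 1 - h) * norm (xp - xp'))"
proof -
  obtain Gf where f_deriv: "\<And>\<tau> x. \<tau> \<in> {1..p} \<Longrightarrow> (f \<tau> has_derivative (\<lambda>h. Gf \<tau> x \<bullet> h)) (at x)"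
    and f_convex: "\<And>\<tau>. \<tau> \<in> {1..p} \<Longrightarrow> \<forall>x y. f \<tau> y \<ge> f \<tau> x + Gf \<tau> x \<bullet> (y - x) + mu/2 * (norm (y - x))\<^sup>2"
    using gradient_choice[of "{1..p}" f
        "\<lambda>\<tau> G. \<forall>x y. f \<tau> y \<ge> f \<tau> x + G x \<bullet> (y - x) + mu/2 * (norm (y - x))\<^sup>2"] f
    unfolding strongly_convex_def by blast
  obtain Gc where c_deriv: "\<And>\<tau> z. \<tau> \<in> {1..p} \<Longrightarrow> (c \<tau> has_derivative (\<lambda>h. Gc \<tau> z \<bullet> h)) (at z)"
    and c_smooth: "\<And>\<tau>. \<tau> \<in> {1..p} \<Longrightarrow> \<forall>z z'. c \<tau> z' \<le> c \<tau> z + Gc \<tau> z \<bullet> (z' - z) + l/2 * (norm (z' - z))\<^sup>2"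
    using gradient_choice[of "{1..p}" c
        "\<lambda>\<tau> G. \<forall>z z'. c \<tau> z' \<le> c \<tau> z + G z \<bullet> (z' - z) + l/2 * (norm (z' - z))\<^sup>2"] c
    unfolding strongly_smooth_def by blast
  have c_convex: "c \<tau> z' \<ge> c \<tau> z + Gc \<tau> z \<bullet> (z' - z)" if "\<tau> \<in> {1..p}" for \<tau> z z'
    by (rule convex_on_ge_gradient) (use c[OF that] c_deriv[OF that] in auto)
  show ?thesis
    by (rule psi_sensitivity[OF assms(1-5) f_deriv f_convex[rule_format] c_deriv c_convex
          c_smooth[rule_format] assms(8)])
qed

theorem theorem1:
  fixes f :: "nat \<Rightarrow> real^'n \<Rightarrow> real"
    and c :: "nat \<Rightarrow> (real^'n) \<times> (real^'n) \<times> (real^'r) \<Rightarrow> real"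
    and p :: nat and \<mu> l :: real
    and x0 x0' xp xp' :: "real^'n" and w w' :: "nat \<Rightarrow> real^'r" and h :: nat
  assumes "p \<ge> 2" and "\<mu> > 0" and "l > 0"
    and "\<And>\<tau>. \<tau> \<in> {1..p} \<Longrightarrow> strongly_convex \<mu> (f \<tau>) \<and> C2 (f \<tau>)"
    and "\<And>\<tau>. \<tau> \<in> {1..p} \<Longrightarrow> convex_on UNIV (c \<tau>) \<and> strongly_smooth l (c \<tau>) \<and> C2 (c \<tau>)"
    and "1 \<le> h" and "h \<le> p - 1"
  shows "norm (psi f c p x0 w xp h - psi f c p x0' w' xp' h)
     \<le> (let C0 = 2 * l / \<mu>; lam0 = 1 - 2 / (sqrt (1 + 2 * l / \<mu>) + 1) in
        C0 * (lam0 powi (int h - 1) * norm (x0 - x0')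
            + (\<Sum>\<tau>=0..p-1. lam0 powi (\<bar>int h - int \<tau>\<bar> - 1) * norm (w \<tau> - w' \<tau>))
            + lam0 powi (int p - int h - 1) * norm (xp - xp')))"
proof -
  define lam where "lam = 1 - 2 / (sqrt (1 + 2 * l / \<mu>) + 1)"
  note lam = decay_rate[OF assms(2,3), folded lam_def]
  have "norm (psi f c p x0 w xp h - psi f c p x0' w' xp' h)
      \<le> 2 * l / \<mu> * (lam ^ (h - 1) * norm (x0 - x0')
        + (\<Sum>\<tau><p. lam ^ edge_dist (\<tau>+1) h * norm (w \<tau> - w' \<tau>))
        + lam ^ (p - 1 - h) * norm (xp - xp'))"
    by (rule psi_sensitivity_of_strongly_convex[OF _ assms(2,3) lam(1,3)])
      (use assms in auto)
  also have "\<dots> \<le> 2 * l / \<mu> * (lam powi (int h - 1) * norm (x0 - x0')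
        + (\<Sum>\<tau>=0..p-1. lam powi (\<bar>int h - int \<tau>\<bar> - 1) * norm (w \<tau> - w' \<tau>))
        + lam powi (int p - int h - 1) * norm (xp - xp'))"
    by (rule power_bound_le_power_int_bound[OF lam(1,2)]) (use assms(1-3,6,7) in auto)
  finally show ?thesis by (simp add: lam_def Let_def)
qed

end
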